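(* Let $\mathcal{A}\subset\mathbb{R}^n$ be a nonempty compact set, $\Xi\subseteq\mathbb{R}^n$, $V:\mathbb{R}^n\to\mathbb{R}_+$ and $\Psi:\mathbb{R}^n\rightrightarrows\mathbb{R}^n$, and assume one of the following two settings holds: (i) $\Xi$ is nonempty, closed and convex, $\mathcal{A}$ is convex, and $V(y)=\tfrac12\|y-\mathbf{P}_{\mathcal{A}}(y)\|^2$; (ii) $\Xi=\mathbb{R}^n$ and $V$ is continuously differentiable with locally Lipschitz gradient, positive definite and radially unbounded with respect to $\mathcal{A}$. Assume $\Psi$ is SPSP with respect to $V$ on $\Xi$, and that there exists $\beta>0$ such that for all $y\in\Xi$ and all $s\in\Psi(y)$, $$\|s\|^2\le \beta\,\nabla V(y)^T s .$$ Then $\mathcal{A}$ is SPAS for the iterative method $y^+=\mathbf{P}_\Xi[y-\alpha s]$, $s\in\Psi(y)$, with parameter $\alpha>0$.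
   Context: $\|\cdot\|$ is Euclidean; $\mathbf{P}_S$ is the orthogonal projection onto a nonempty closed convex set $S$. For compact $S$ and $r>0$: $\bar B_r(S)=\{x:\|x-\mathbf{P}_S(x)\|\le r\}$, $B_r(S)=\{x:\|x-\mathbf{P}_S(x)\|<r\}$ (distance to $S$). A function $V$ is positive definite w.r.t. a closed set $S$ if $V=0$ on $S$ and $V>0$ off $S$; it is radially unbounded w.r.t. $S$ (on a set $\Xi$) if for every $B\in\mathbb{R}$ there is $r>0$ with $V(x)>B$ for all $x$ (in $\Xi$) outside $\bar B_r(S)$. SPSP: Let $V:\mathbb{R}^n\to\mathbb{R}_+$ be differentiable, positive definite and radially unbounded w.r.t. compact $\mathcal{A}$, and let $\Xi$ strictly contain $\mathcal{A}$ (every point of $\mathcal{A}$ has an open ball around it contained in $\Xi$). $\Psi$ is semiglobally, practically, strictly pseudogradient (SPSP) w.r.t. $V$ on $\Xi$ if there exist $\epsilon\ge0$, $b\ge0$ such that $\nabla V(y)^Ts\ge -b$ for all $y\in\Xi\cap\bar B_\epsilon(\mathcal{A})$, $s\in\Psi(y)$, and for every $\sigma>\epsilon$ there is a continuous $\phi_{\sigma,\epsilon}:\mathbb{R}^n\to\mathbb{R}$, positive on $\Xi\cap(\bar B_\sigma(\mathcal{A})\setminus B_\epsilon(\mathcal{A}))$ and radially unbounded w.r.t. $\mathcal{A}$ on $\Xi$, with $\nabla V(y)^Ts\ge\phi_{\sigma,\epsilon}(y)$ for all $y\in\Xi\cap(\bar B_\sigma(\mathcal{A})\setminus B_\epsilon(\mathcal{A}))$,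 $s\in\Psi(y)$. SPAS (for the iteration with parameter $\alpha$; statements below concern every sequence $(y(t))_{t\in\mathbb{N}}$ with $y(0)\in\Xi$, $y(t+1)=\mathbf{P}_\Xi[y(t)-\alpha s(t)]$, $s(t)\in\Psi(y(t))$): $\mathcal{A}$ is practically stable if for some $\check\rho_s>0$ and every $\rho_s>\check\rho_s$ there exist $\delta>0$ and a nonempty set $P_s\subset(0,\infty)$ such that whenever $\alpha\in P_s$ and $y(0)\in\bar B_\delta(\mathcal{A})\cap\Xi$, $y(t)\in\bar B_{\rho_s}(\mathcal{A})\cap\Xi$ for all $t$. A compact $S$ is uniformly attractive on compact $\Omega$ if for every $\varepsilon>0$ with $\bar B_\varepsilon(S)\cap\Xi\subset\Omega\cap\Xi$ there is $T\in\mathbb{N}$ such that $y(t)\in\bar B_\varepsilon(S)$ whenever $y(0)\in\Omega$ and $t\ge T$. $\mathcal{A}$ is semiglobally practically attractive if for some $\check\rho_a>0$ and all $\sigma>\rho_a>\check\rho_a$ there is a nonempty $P_a\subset(0,\infty)$ such that whenever $\alpha\in P_a$, $\bar B_{\rho_a}(\mathcal{A})$ is uniformly attractive on $\bar B_\sigma(\mathcal{A})$. $\mathcal{A}$ is SPAS (semiglobally practically asymptotically stable) if it is practically stable and semiglobally practically attractive. *)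

theory Defs
  imports "HOL-Analysis.Analysis"
begin

definition cballS :: "real \<Rightarrow> 'a::euclidean_space set \<Rightarrow> 'a set" where
  "cballS r S = {x. infdist x S \<le> r}"

definition ballS :: "real \<Rightarrow> 'a::euclidean_space set \<Rightarrow> 'a set" where
  "ballS r S = {x. infdist x S < r}"

definition gradV :: "('a::euclidean_space \<Rightarrow> real) \<Rightarrow> 'a \<Rightarrow> 'a \<Rightarrow> real" where
  "gradV V y s = frechet_derivative V (at y) s"

definition pos_def_wrt :: "('a::euclidean_space \<Rightarrow> real) \<Rightarrow> 'a set \<Rightarrow> bool" where
  "pos_def_wrt V S \<longleftrightarrow> (\<forall>x\<in>S. V x = 0) \<and> (\<forall>x. x \<notin> S \<longrightarrow> V x > 0)"

definition rad_unb_on :: "('a::euclidean_space \<Rightarrow> real) \<Rightarrow> 'a set \<Rightarrow> 'a set \<Rightarrow> bool" where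
  "rad_unb_on V S X \<longleftrightarrow> (\<forall>B::real. \<exists>r>0. \<forall>x\<in>X. x \<notin> cballS r S \<longrightarrow> V x > B)"

text \<open>SPSP, including the standing assumptions on V, A and Xi of the definition.\<close>
definition SPSP :: "('a::euclidean_space \<Rightarrow> 'a set) \<Rightarrow> ('a \<Rightarrow> real) \<Rightarrow> 'a set \<Rightarrow> 'a set \<Rightarrow> bool" where
  "SPSP Psi V Xi A \<longleftrightarrow>
     (\<forall>y. V differentiable (at y)) \<and> (\<forall>y. V y \<ge> 0) \<and>
     pos_def_wrt V A \<and> rad_unb_on V A UNIV \<and> compact A \<and>
     (\<forall>a\<in>A. \<exists>e>0. ball a e \<subseteq> Xi) \<and>
     (\<exists>eps\<ge>0. \<exists>b\<ge>0.
        (\<forall>y\<in>Xi \<inter> cballS eps A. \<forall>s\<in>Psi y. gradV V y s \<ge> - b) \<and>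
        (\<forall>sigma>eps. \<exists>phi :: 'a \<Rightarrow> real.
            continuous_on UNIV phi \<and>
            (\<forall>y\<in>Xi \<inter> (cballS sigma A - ballS eps A). phi y > 0) \<and>
            rad_unb_on phi A Xi \<and>
            (\<forall>y\<in>Xi \<inter> (cballS sigma A - ballS eps A). \<forall>s\<in>Psi y. gradV V y s \<ge> phi y)))"

definition traj :: "'a set \<Rightarrow> ('a::euclidean_space \<Rightarrow> 'a set) \<Rightarrow> real \<Rightarrow> (nat \<Rightarrow> 'a) \<Rightarrow> bool" where
  "traj Xi Psi alpha y \<longleftrightarrow> y 0 \<in> Xi \<and>
     (\<forall>t. \<exists>s\<in>Psi (y t). y (Suc t) = closest_point Xi (y t - alpha *\<^sub>R s))"

definition pract_stable :: "'a set \<Rightarrow> ('a::euclidean_space \<Rightarrow> 'a set) \<Rightarrow> 'a set \<Rightarrow> bool" where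
  "pract_stable Xi Psi A \<longleftrightarrow>
     (\<exists>rc>0. \<forall>rs>rc. \<exists>delta>0. \<exists>Ps. Ps \<noteq> {} \<and> Ps \<subseteq> {0<..} \<and>
        (\<forall>alpha\<in>Ps. \<forall>y. traj Xi Psi alpha y \<and> y 0 \<in> cballS delta A \<inter> Xi \<longrightarrow>
            (\<forall>t. y t \<in> cballS rs A \<inter> Xi)))"

definition unif_attractive :: "'a set \<Rightarrow> ('a::euclidean_space \<Rightarrow> 'a set) \<Rightarrow> real \<Rightarrow> 'a set \<Rightarrow> 'a set \<Rightarrow> bool" where
  "unif_attractive Xi Psi alpha S Omega \<longleftrightarrow>
     (\<forall>e>0. cballS e S \<inter> Xi \<subseteq> Omega \<inter> Xi \<longrightarrow>
        (\<exists>T::nat. \<forall>y. traj Xi Psi alpha y \<and> y 0 \<in> Omega \<longrightarrow> (\<forall>t\<ge>T. y t \<in> cballS e S)))"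

definition semiglob_pract_attractive :: "'a set \<Rightarrow> ('a::euclidean_space \<Rightarrow> 'a set) \<Rightarrow> 'a set \<Rightarrow> bool" where
  "semiglob_pract_attractive Xi Psi A \<longleftrightarrow>
     (\<exists>rc>0. \<forall>ra sigma. rc < ra \<and> ra < sigma \<longrightarrow>
        (\<exists>Pa. Pa \<noteq> {} \<and> Pa \<subseteq> {0<..} \<and>
           (\<forall>alpha\<in>Pa. unif_attractive Xi Psi alpha (cballS ra A) (cballS sigma A))))"

definition SPAS :: "'a set \<Rightarrow> ('a::euclidean_space \<Rightarrow> 'a set) \<Rightarrow> 'a set \<Rightarrow> bool" where
  "SPAS Xi Psi A \<longleftrightarrow> pract_stable Xi Psi A \<and> semiglob_pract_attractive Xi Psi A"

end

theory Submission
  imports Defs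
begin

text \<open>
  Everything rests on a sufficient-decrease property of the Lyapunov function V: on each
  sublevel set of V some step size \<open>\<alpha> > 0\<close> makes every projected step decrease V by at
  least \<open>\<alpha>/2 \<cdot> \<nabla>V(y)\<^sup>T s\<close>. In setting (i) this holds for \<open>\<alpha> = 1/\<beta>\<close>, because projecting
  onto \<open>\<Xi> \<supseteq> \<A>\<close> does not increase the distance to \<open>\<A>\<close>;
  in setting (ii) it follows from the descent lemma for a gradient that is Lipschitz on a
  ball containing every step taken from the sublevel set, which exists because
  \<open>\<parallel>s\<parallel> \<le> \<beta> \<parallel>\<nabla>V(y)\<parallel>\<close>.

  As \<open>\<nabla>V(y)\<^sup>T s \<ge> 0\<close>, V is nonincreasing along trajectories, and radial unboundedness turns
  sublevel sets into neighbourhoods of \<open>\<A>\<close>: this is practical stability. Away from the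
  \<open>\<epsilon>\<close>-neighbourhood, the SPSP bound \<open>\<phi>\<close> is bounded below by some \<open>m > 0\<close> on the
  compact part of a sublevel set, so V drops by \<open>\<alpha> m / 2\<close> per step there. Since V is
  nonnegative, every trajectory enters the neighbourhood within a uniform number of steps and
  afterwards stays in the sublevel set it reached, which gives semiglobal practical
  attractivity.
\<close>

section \<open>Neighbourhoods and sublevel sets of \<open>\<A>\<close>\<close>

lemma cballS_mono: "r \<le> r' \<Longrightarrow> cballS r S \<subseteq> cballS r' S"
  by (auto simp: cballS_def)

lemma compact_cballS:
  fixes A :: "'a::euclidean_space set"
  assumes "compact A" "A \<noteq> {}"
  shows "compact (cballS r A)"
proof (rule compact_eq_bounded_closed[THEN iffD2, OF conjI])
  show "closed (cballS r A)"
    unfolding cballS_def by (intro closed_Collect_le continuous_intros)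
  obtain M where M: "\<forall>a\<in>A. norm a \<le> M"
    using compact_imp_bounded[OF assms(1)] bounded_iff by blast
  have "norm x \<le> M + r" if "x \<in> cballS r A" for x
  proof -
    obtain a where "a \<in> A" "infdist x A = dist x a"
      using infdist_attains_inf[OF compact_imp_closed[OF assms(1)] assms(2)] by blast
    then show ?thesis
      using M that norm_triangle_sub[of x a] by (force simp: cballS_def dist_norm)
  qed
  then show "bounded (cballS r A)"
    unfolding bounded_iff by blast
qed

lemma cballS_subset_sublevel:
  fixes A :: "'a::euclidean_space set" and V :: "'a \<Rightarrow> real"
  assumes "continuous_on UNIV V" "compact A" "A \<noteq> {}"
  obtains c where "cballS r A \<subseteq> {x. V x \<le> c}"
proof -
  obtain c where "\<And>x. x \<in> cballS r A \<Longrightarrow> norm (V x) \<le> c"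
    using continuous_on_compact_bound[OF compact_cballS[OF assms(2,3)]
        continuous_on_subset[OF assms(1)]] by blast
  then have "cballS r A \<subseteq> {x. V x \<le> c}"
    by (force dest: abs_le_D1)
  then show ?thesis
    by (rule that)
qed

lemma sublevel_subset_cballS:
  assumes "rad_unb_on V A UNIV"
  obtains r where "r > 0" "{x. V x \<le> c} \<subseteq> cballS r A"
proof -
  obtain r where "r > 0" "\<forall>x. x \<notin> cballS r A \<longrightarrow> V x > c"
    using assms unfolding rad_unb_on_def by blast
  then have "{x. V x \<le> c} \<subseteq> cballS r A"
    by force
  with \<open>r > 0\<close> show ?thesis
    by (rule that)
qed

lemma compact_sublevel:
  fixes A :: "'a::euclidean_space set" and V :: "'a \<Rightarrow> real"
  assumes "continuous_on UNIV V" "rad_unb_on V A UNIV" "compact A" "A \<noteq> {}"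
  shows "compact {x. V x \<le> c}"
proof -
  obtain r where "{x. V x \<le> c} \<subseteq> cballS r A"
    using sublevel_subset_cballS[OF assms(2)] by blast
  moreover have "closed {x. V x \<le> c}"
    by (intro closed_Collect_le assms(1) continuous_on_const)
  ultimately show ?thesis
    using compact_Int_closed[OF compact_cballS[OF assms(3,4)], of "{x. V x \<le> c}" r]
    by (simp add: Int_absorb1)
qed

lemma continuous_on_compact_pos_bound_below:
  fixes f :: "'a::metric_space \<Rightarrow> real"
  assumes "compact K" "continuous_on K f" "\<forall>x\<in>K. f x > 0"
  obtains m where "m > 0" "\<forall>x\<in>K. m \<le> f x"
proof (cases "K = {}")
  case True
  then show ?thesis
    using that[OF zero_less_one] by blast
next
  case False
  then obtain x0 where "x0 \<in> K" "\<forall>x\<in>K. f x0 \<le> f x"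
    using continuous_attains_inf[OF assms(1) _ assms(2)] by blast
  then show ?thesis
    using that assms(3) by blast
qed

lemma nonneg_decreasing_exits:
  fixes v :: "nat \<Rightarrow> real"
  assumes "c > 0" "\<And>t. v t \<ge> 0" "v 0 \<le> B"
    and decrease: "\<And>t. P t \<Longrightarrow> v (Suc t) \<le> v t - c"
  shows "\<exists>t \<le> nat \<lceil>B / c\<rceil>. \<not> P t"
proof (rule ccontr)
  define N where "N = nat \<lceil>B / c\<rceil>"
  assume "\<not> ?thesis"
  then have "P t" if "t \<le> N" for t
    using that N_def by auto
  then have "v t \<le> v 0 - real t * c" if "t \<le> Suc N" for t
    using that
  proof (induction t)
    case (Suc t)
    then have "v (Suc t) \<le> v t - c"
      by (intro decrease) simp
    with Suc show ?case
      by (simp add: algebra_simps)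
  qed simp
  then have "v (Suc N) \<le> B - real N * c - c"
    using assms(3) by (force simp: algebra_simps)
  moreover have "B \<le> real N * c"
    using assms(1) real_nat_ceiling_ge[of "B / c"] by (simp add: N_def field_simps)
  ultimately show False
    using assms(1) assms(2)[of "Suc N"] by linarith
qed

section \<open>Trajectories under sufficient decrease\<close>

definition sufficient_decrease ::
    "'a set \<Rightarrow> ('a::euclidean_space \<Rightarrow> 'a set) \<Rightarrow> ('a \<Rightarrow> real) \<Rightarrow> real \<Rightarrow> real \<Rightarrow> bool" where
  "sufficient_decrease Xi Psi V alpha B \<longleftrightarrow>
     (\<forall>y\<in>Xi. V y \<le> B \<longrightarrow>
        (\<forall>s\<in>Psi y. V (closest_point Xi (y - alpha *\<^sub>R s)) \<le> V y - alpha / 2 * gradV V y s))"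

lemma traj_in_set:
  assumes "traj Xi Psi alpha y" "closed Xi"
  shows "y t \<in> Xi"
proof (cases t)
  case (Suc t')
  from assms(1) obtain s where "y t = closest_point Xi (y t' - alpha *\<^sub>R s)"
    unfolding traj_def Suc by blast
  moreover have "Xi \<noteq> {}"
    using assms(1) unfolding traj_def by blast
  ultimately show ?thesis
    using closest_point_in_set[OF assms(2)] by simp
qed (use assms in \<open>simp add: traj_def\<close>)

lemma traj_sufficient_decrease:
  assumes traj: "traj Xi Psi alpha y" and "closed Xi" "alpha \<ge> 0"
    and decrease: "sufficient_decrease Xi Psi V alpha B"
    and grad_nonneg: "\<forall>y\<in>Xi. \<forall>s\<in>Psi y. gradV V y s \<ge> 0"
    and "V (y 0) \<le> B"
  shows "\<exists>s\<in>Psi (y t). V (y (Suc t)) \<le> V (y t) - alpha / 2 * gradV V (y t) s"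
    and "decseq (\<lambda>t. V (y t))"
proof -
  have step: "\<exists>s\<in>Psi (y t). V (y (Suc t)) \<le> V (y t) - alpha / 2 * gradV V (y t) s"
    if "V (y t) \<le> B" for t
  proof -
    obtain s where "s \<in> Psi (y t)" "y (Suc t) = closest_point Xi (y t - alpha *\<^sub>R s)"
      using traj unfolding traj_def by blast
    moreover have "y t \<in> Xi"
      using traj_in_set[OF traj \<open>closed Xi\<close>] .
    ultimately show ?thesis
      using decrease that unfolding sufficient_decrease_def by auto
  qed
  have step_le: "V (y (Suc t)) \<le> V (y t)" if below: "V (y t) \<le> B" for t
  proof -
    obtain s where "s \<in> Psi (y t)" "V (y (Suc t)) \<le> V (y t) - alpha / 2 * gradV V (y t) s"
      using step[OF below] by blast
    moreover have "gradV V (y t) s \<ge> 0"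
      using grad_nonneg traj_in_set[OF traj \<open>closed Xi\<close>] \<open>s \<in> Psi (y t)\<close> by blast
    ultimately show ?thesis
      using mult_nonneg_nonneg[of "alpha / 2" "gradV V (y t) s"] \<open>alpha \<ge> 0\<close> by linarith
  qed
  have below: "V (y t) \<le> B" for t
  proof (induction t)
    case (Suc t)
    with step_le[OF Suc] show ?case
      by linarith
  qed (fact \<open>V (y 0) \<le> B\<close>)
  show "\<exists>s\<in>Psi (y t). V (y (Suc t)) \<le> V (y t) - alpha / 2 * gradV V (y t) s"
    using step[OF below] .
  show "decseq (\<lambda>t. V (y t))"
    using step_le[OF below] by (simp add: decseq_SucI)
qed

lemma traj_reaches_set:
  assumes traj: "traj Xi Psi alpha y" and "closed Xi" "alpha > 0" "m > 0"
    and decrease: "sufficient_decrease Xi Psi V alpha B"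
    and grad_nonneg: "\<forall>y\<in>Xi. \<forall>s\<in>Psi y. gradV V y s \<ge> 0"
    and grad_outside: "\<forall>x\<in>Xi. V x \<le> B \<longrightarrow> x \<notin> S \<longrightarrow> (\<forall>s\<in>Psi x. m \<le> gradV V x s)"
    and "\<forall>x. V x \<ge> 0" "V (y 0) \<le> B"
  shows "\<exists>t \<le> nat \<lceil>B / (alpha * m / 2)\<rceil>. y t \<in> S"
proof -
  note descent = traj_sufficient_decrease[OF traj \<open>closed Xi\<close> less_imp_le[OF \<open>alpha > 0\<close>]
      decrease grad_nonneg \<open>V (y 0) \<le> B\<close>]
  have "V (y (Suc t)) \<le> V (y t) - alpha * m / 2" if "y t \<notin> S" for t
  proof -
    obtain s where s: "s \<in> Psi (y t)" "V (y (Suc t)) \<le> V (y t) - alpha / 2 * gradV V (y t) s"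
      using descent(1) by blast
    have "V (y t) \<le> V (y 0)"
      using decseqD[OF descent(2), of 0 t] by simp
    then have "V (y t) \<le> B"
      using \<open>V (y 0) \<le> B\<close> by linarith
    then have "m \<le> gradV V (y t) s"
      using grad_outside traj_in_set[OF traj \<open>closed Xi\<close>] that s(1) by blast
    then have "alpha / 2 * m \<le> alpha / 2 * gradV V (y t) s"
      using \<open>alpha > 0\<close> by (simp add: mult_left_mono)
    then show ?thesis
      using s(2) by simp
  qed
  moreover have "alpha * m / 2 > 0"
    using \<open>alpha > 0\<close> \<open>m > 0\<close> by simp
  ultimately show ?thesis
    using nonneg_decreasing_exits[of "alpha * m / 2" "\<lambda>t. V (y t)" B "\<lambda>t. y t \<notin> S"]
      \<open>\<forall>x. V x \<ge> 0\<close> \<open>V (y 0) \<le> B\<close> by blast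
qed

lemma pract_stable_of_sufficient_decrease:
  fixes A Xi :: "'a::euclidean_space set" and V :: "'a \<Rightarrow> real"
  assumes "continuous_on UNIV V" "rad_unb_on V A UNIV" "compact A" "A \<noteq> {}" "closed Xi"
    and grad_nonneg: "\<forall>y\<in>Xi. \<forall>s\<in>Psi y. gradV V y s \<ge> 0"
    and decrease: "\<And>B. \<exists>alpha>0. sufficient_decrease Xi Psi V alpha B"
  shows "pract_stable Xi Psi A"
proof -
  obtain c where c: "cballS 1 A \<subseteq> {x. V x \<le> c}"
    using cballS_subset_sublevel[OF assms(1,3,4)] .
  obtain r where r: "r > 0" "{x. V x \<le> c} \<subseteq> cballS r A"
    using sublevel_subset_cballS[OF assms(2)] .
  obtain alpha where alpha: "alpha > 0" "sufficient_decrease Xi Psi V alpha c"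
    using decrease by blast
  have stays: "y t \<in> cballS r A \<inter> Xi" if traj: "traj Xi Psi alpha y" and "y 0 \<in> cballS 1 A" for y t
  proof -
    have "V (y 0) \<le> c"
      using c \<open>y 0 \<in> cballS 1 A\<close> by blast
    moreover have "decseq (\<lambda>t. V (y t))"
      using traj_sufficient_decrease(2)[OF traj \<open>closed Xi\<close> _ alpha(2) grad_nonneg] alpha(1)
        \<open>V (y 0) \<le> c\<close> by simp
    ultimately have "V (y t) \<le> c"
      using decseqD[of "\<lambda>t. V (y t)" 0 t] by simp
    then show ?thesis
      using r(2) traj_in_set[OF traj \<open>closed Xi\<close>] by blast
  qed
  show ?thesis
    unfolding pract_stable_def
  proof (rule exI[of _ r], intro conjI allI impI)
    fix rs assume "r < rs"
    then have "\<forall>y. traj Xi Psi alpha y \<and> y 0 \<in> cballS 1 A \<inter> Xi \<longrightarrow> (\<forall>t. y t \<in> cballS rs A \<inter> Xi)"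
      using stays cballS_mono[OF less_imp_le, of r rs A] by blast
    then show "\<exists>delta>0. \<exists>Ps. Ps \<noteq> {} \<and> Ps \<subseteq> {0<..} \<and>
        (\<forall>alpha\<in>Ps. \<forall>y. traj Xi Psi alpha y \<and> y 0 \<in> cballS delta A \<inter> Xi \<longrightarrow>
            (\<forall>t. y t \<in> cballS rs A \<inter> Xi))"
      using alpha(1) by (intro exI[of _ 1] exI[of _ "{alpha}"]) auto
  qed (fact \<open>r > 0\<close>)
qed

lemma gradV_uniformly_pos_on_sublevel:
  fixes A Xi :: "'a::euclidean_space set" and V :: "'a \<Rightarrow> real"
  assumes "rad_unb_on V A UNIV" "compact A" "A \<noteq> {}" "closed Xi" "r > eps"
    and strict: "\<And>sigma. sigma > eps \<Longrightarrow> \<exists>phi. continuous_on UNIV phi \<and>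
            (\<forall>y\<in>Xi \<inter> (cballS sigma A - ballS eps A). phi y > 0) \<and>
            (\<forall>y\<in>Xi \<inter> (cballS sigma A - ballS eps A). \<forall>s\<in>Psi y. gradV V y s \<ge> phi y)"
  obtains m where "m > 0"
    "\<forall>x\<in>Xi. V x \<le> B \<longrightarrow> x \<notin> cballS r A \<longrightarrow> (\<forall>s\<in>Psi x. m \<le> gradV V x s)"
proof -
  obtain rB where rB: "{x. V x \<le> B} \<subseteq> cballS rB A"
    using sublevel_subset_cballS[OF assms(1)] by blast
  define sigma where "sigma = max rB r"
  obtain phi where phi: "continuous_on UNIV phi"
      "\<forall>y\<in>Xi \<inter> (cballS sigma A - ballS eps A). phi y > 0"
      "\<forall>y\<in>Xi \<inter> (cballS sigma A - ballS eps A). \<forall>s\<in>Psi y. gradV V y s \<ge> phi y"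
    using strict[of sigma] \<open>r > eps\<close> unfolding sigma_def by (auto simp: less_max_iff_disj)
  define K where "K = (Xi \<inter> {x. r \<le> infdist x A}) \<inter> cballS sigma A"
  have "closed (Xi \<inter> {x. r \<le> infdist x A})"
    by (intro closed_Int \<open>closed Xi\<close> closed_Collect_le continuous_intros)
  then have "compact K"
    unfolding K_def using closed_Int_compact compact_cballS[OF assms(2,3)] by blast
  moreover have K: "K \<subseteq> Xi \<inter> (cballS sigma A - ballS eps A)"
    using \<open>r > eps\<close> unfolding K_def ballS_def by auto
  moreover have "\<forall>x\<in>K. phi x > 0"
    using K phi(2) by blast
  ultimately obtain m where m: "m > 0" "\<forall>x\<in>K. m \<le> phi x"
    using continuous_on_compact_pos_bound_below continuous_on_subset[OF phi(1) subset_UNIV]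
    by blast
  have "m \<le> gradV V x s"
    if "x \<in> Xi" "V x \<le> B" "x \<notin> cballS r A" "s \<in> Psi x" for x s
  proof -
    have "x \<in> cballS rB A"
      using rB \<open>V x \<le> B\<close> by blast
    with that(1,3) have "x \<in> K"
      unfolding K_def sigma_def cballS_def by auto
    then have "m \<le> phi x" "phi x \<le> gradV V x s"
      using m(2) K phi(3) \<open>s \<in> Psi x\<close> by blast+
    then show ?thesis
      by linarith
  qed
  with m(1) show ?thesis
    using that by blast
qed

lemma semiglob_pract_attractive_of_sufficient_decrease:
  fixes A Xi :: "'a::euclidean_space set" and V :: "'a \<Rightarrow> real"
  assumes "continuous_on UNIV V" "\<forall>x. V x \<ge> 0" "rad_unb_on V A UNIV" "compact A" "A \<noteq> {}"
    and "closed Xi"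
    and grad_nonneg: "\<forall>y\<in>Xi. \<forall>s\<in>Psi y. gradV V y s \<ge> 0"
    and strict: "\<And>sigma. sigma > eps \<Longrightarrow> \<exists>phi. continuous_on UNIV phi \<and>
            (\<forall>y\<in>Xi \<inter> (cballS sigma A - ballS eps A). phi y > 0) \<and>
            (\<forall>y\<in>Xi \<inter> (cballS sigma A - ballS eps A). \<forall>s\<in>Psi y. gradV V y s \<ge> phi y)"
    and decrease: "\<And>B. \<exists>alpha>0. sufficient_decrease Xi Psi V alpha B"
  shows "semiglob_pract_attractive Xi Psi A"
proof -
  obtain c where c: "cballS (eps + 1) A \<subseteq> {x. V x \<le> c}"
    using cballS_subset_sublevel[OF assms(1,4,5)] .
  obtain r where r: "r > 0" "{x. V x \<le> c} \<subseteq> cballS r A"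
    using sublevel_subset_cballS[OF assms(3)] .
  show ?thesis
    unfolding semiglob_pract_attractive_def
  proof (rule exI[of _ r], intro conjI allI impI)
    fix ra sigma assume "r < ra \<and> ra < sigma"
    obtain B where B: "cballS sigma A \<subseteq> {x. V x \<le> B}"
      using cballS_subset_sublevel[OF assms(1,4,5)] .
    obtain m where m: "m > 0"
      "\<forall>x\<in>Xi. V x \<le> B \<longrightarrow> x \<notin> cballS (eps + 1) A \<longrightarrow> (\<forall>s\<in>Psi x. m \<le> gradV V x s)"
      using gradV_uniformly_pos_on_sublevel[OF assms(3,4,5,6) _ strict, of "eps + 1"] by auto
    obtain alpha where alpha: "alpha > 0" "sufficient_decrease Xi Psi V alpha B"
      using decrease by blast
    define T where "T = nat \<lceil>B / (alpha * m / 2)\<rceil>"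
    have "y t \<in> cballS ra A" if traj: "traj Xi Psi alpha y" "y 0 \<in> cballS sigma A" "T \<le> t" for y t
    proof -
      have "V (y 0) \<le> B"
        using B \<open>y 0 \<in> cballS sigma A\<close> by blast
      then obtain t0 where "t0 \<le> T" "y t0 \<in> cballS (eps + 1) A"
        using traj_reaches_set[OF traj(1) \<open>closed Xi\<close> alpha(1) m(1) alpha(2) grad_nonneg m(2) assms(2)]
        unfolding T_def by blast
      moreover have "decseq (\<lambda>t. V (y t))"
        using traj_sufficient_decrease(2)[OF traj(1) \<open>closed Xi\<close> _ alpha(2) grad_nonneg]
          alpha(1) \<open>V (y 0) \<le> B\<close> by simp
      ultimately have "V (y t) \<le> V (y t0)" "V (y t0) \<le> c"
        using c \<open>T \<le> t\<close> decseqD[of "\<lambda>t. V (y t)" t0 t] by auto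
      then have "V (y t) \<le> c"
        by linarith
      then show ?thesis
        using r(2) cballS_mono[of r ra A] \<open>r < ra \<and> ra < sigma\<close> by auto
    qed
    then have "unif_attractive Xi Psi alpha (cballS ra A) (cballS sigma A)"
      unfolding unif_attractive_def cballS_def[of _ "cballS ra A"]
      by (intro allI impI exI[of _ T]) simp
    then show "\<exists>Pa. Pa \<noteq> {} \<and> Pa \<subseteq> {0<..} \<and>
           (\<forall>alpha\<in>Pa. unif_attractive Xi Psi alpha (cballS ra A) (cballS sigma A))"
      using alpha(1) by (intro exI[of _ "{alpha}"]) auto
  qed (fact \<open>r > 0\<close>)
qed

lemma SPAS_of_sufficient_decrease:
  fixes A Xi :: "'a::euclidean_space set" and V :: "'a \<Rightarrow> real"
  assumes "SPSP Psi V Xi A" "A \<noteq> {}" "closed Xi"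
    and grad_nonneg: "\<forall>y\<in>Xi. \<forall>s\<in>Psi y. gradV V y s \<ge> 0"
    and decrease: "\<And>B. \<exists>alpha>0. sufficient_decrease Xi Psi V alpha B"
  shows "SPAS Xi Psi A"
proof -
  have dV: "\<forall>y. V differentiable (at y)" and V_nonneg: "\<forall>x. V x \<ge> 0"
    and unb: "rad_unb_on V A UNIV" and "compact A"
    using assms(1) unfolding SPSP_def by blast+
  obtain eps where "\<forall>sigma>eps. \<exists>phi. continuous_on UNIV phi \<and>
            (\<forall>y\<in>Xi \<inter> (cballS sigma A - ballS eps A). phi y > 0) \<and> rad_unb_on phi A Xi \<and>
            (\<forall>y\<in>Xi \<inter> (cballS sigma A - ballS eps A). \<forall>s\<in>Psi y. gradV V y s \<ge> phi y)"
    using assms(1) unfolding SPSP_def by blast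
  then have strict: "\<exists>phi. continuous_on UNIV phi \<and>
            (\<forall>y\<in>Xi \<inter> (cballS sigma A - ballS eps A). phi y > 0) \<and>
            (\<forall>y\<in>Xi \<inter> (cballS sigma A - ballS eps A). \<forall>s\<in>Psi y. gradV V y s \<ge> phi y)"
    if "sigma > eps" for sigma
    using that by blast
  have "continuous_on UNIV V"
    using dV differentiable_at_imp_differentiable_on differentiable_imp_continuous_on by blast
  then show ?thesis
    unfolding SPAS_def
    using pract_stable_of_sufficient_decrease[OF _ unb \<open>compact A\<close> assms(2,3) grad_nonneg decrease]
      semiglob_pract_attractive_of_sufficient_decrease[OF _ V_nonneg unb \<open>compact A\<close> assms(2,3)
        grad_nonneg strict decrease]
    by blast
qed

section \<open>Setting (i): half the squared distance to \<open>\<A>\<close>\<close>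

lemma gradV_half_sq_dist:
  fixes A :: "'a::euclidean_space set" and V :: "'a \<Rightarrow> real"
  assumes "closed A" "A \<noteq> {}"
    and V: "\<forall>y. V y = 1/2 * (norm (y - closest_point A y))\<^sup>2"
    and "V differentiable (at y)"
  shows "gradV V y h = (y - closest_point A y) \<bullet> h"
proof -
  define D where "D = frechet_derivative V (at y)"
  define w where "w = y - closest_point A y"
  have "(V has_derivative D) (at y)"
    using assms(4) frechet_derivative_works D_def by blast
  moreover have "((\<lambda>t::real. y + t *\<^sub>R h) has_derivative (\<lambda>t. t *\<^sub>R h)) (at 0)"
    by (auto intro!: derivative_eq_intros)
  ultimately have "((\<lambda>t. V (y + t *\<^sub>R h)) has_derivative (\<lambda>t. D (t *\<^sub>R h))) (at 0)"
    using has_derivative_compose[of "\<lambda>t. y + t *\<^sub>R h" _ 0 UNIV V D] by simp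
  moreover have "(\<lambda>t. D (t *\<^sub>R h)) = (*) (D h)"
    using linear_cmul[OF has_derivative_linear[OF \<open>(V has_derivative D) (at y)\<close>]]
    by (auto simp: mult.commute)
  ultimately have dV: "((\<lambda>t. V (y + t *\<^sub>R h)) has_field_derivative D h) (at 0)"
    unfolding has_field_derivative_def by simp
  define f where "f t = V (y + t *\<^sub>R h) - t * (w \<bullet> h) - t\<^sup>2 / 2 * (h \<bullet> h)" for t
  have deriv: "(f has_field_derivative (D h - w \<bullet> h)) (at 0)"
    unfolding f_def by (rule derivative_eq_intros dV refl | simp)+
  \<comment> \<open>V lies below the quadratic \<open>t \<mapsto> \<parallel>w + t h\<parallel>\<^sup>2/2\<close>, which touches it at \<open>t = 0\<close>.\<close>
  have "f t \<le> f 0" for t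
  proof -
    have "norm (y + t *\<^sub>R h - closest_point A (y + t *\<^sub>R h)) \<le> norm (w + t *\<^sub>R h)"
      using closest_point_le[OF assms(1) closest_point_in_set[OF assms(1,2)], of "y + t *\<^sub>R h" y]
      by (simp add: dist_norm w_def algebra_simps)
    then have "(norm (y + t *\<^sub>R h - closest_point A (y + t *\<^sub>R h)))\<^sup>2 \<le> (norm (w + t *\<^sub>R h))\<^sup>2"
      by (simp add: power_mono)
    also have "(norm (w + t *\<^sub>R h))\<^sup>2 = (norm w)\<^sup>2 + 2 * t * (w \<bullet> h) + t\<^sup>2 * (h \<bullet> h)"
      unfolding power2_norm_eq_inner
      by (simp add: inner_add_left inner_add_right inner_commute algebra_simps power2_eq_square)
    finally show ?thesis
      using V[rule_format, of "y + t *\<^sub>R h"] V[rule_format, of y] unfolding f_def w_def by simp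
  qed
  then have "D h - w \<bullet> h = 0"
    by (intro DERIV_local_max[OF deriv, of 1]) auto
  then show ?thesis
    unfolding gradV_def D_def w_def by simp
qed

lemma dist_closest_point_of_projection_le:
  fixes A Xi :: "'a::euclidean_space set"
  assumes "closed Xi" "convex Xi" "closed A" "A \<subseteq> Xi" "p \<in> A"
  shows "norm (closest_point Xi z - closest_point A (closest_point Xi z)) \<le> norm (z - p)"
proof -
  define q where "q = closest_point A z"
  have "q \<in> A" "Xi \<noteq> {}"
    using closest_point_in_set[OF assms(3)] assms(4,5) q_def by auto
  have "dist (closest_point Xi z) (closest_point A (closest_point Xi z)) \<le> dist (closest_point Xi z) q"
    using closest_point_le[OF assms(3) \<open>q \<in> A\<close>] .
  also have "\<dots> = dist (closest_point Xi z) (closest_point Xi q)"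
    using closest_point_self[of q Xi] \<open>q \<in> A\<close> assms(4) by auto
  also have "\<dots> \<le> dist z q"
    using closest_point_lipschitz[OF assms(2,1) \<open>Xi \<noteq> {}\<close>] .
  also have "\<dots> \<le> dist z p"
    using closest_point_le[OF assms(3,5)] q_def by simp
  finally show ?thesis
    by (simp add: dist_norm)
qed

lemma sufficient_decrease_half_sq_dist:
  fixes A Xi :: "'a::euclidean_space set" and V :: "'a \<Rightarrow> real"
  assumes "closed Xi" "convex Xi" "closed A" "A \<noteq> {}" "A \<subseteq> Xi"
    and V: "\<forall>y. V y = 1/2 * (norm (y - closest_point A y))\<^sup>2"
    and dV: "\<forall>y. V differentiable (at y)"
    and "beta > 0" and beta: "\<forall>y\<in>Xi. \<forall>s\<in>Psi y. (norm s)\<^sup>2 \<le> beta * gradV V y s"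
    and "alpha \<ge> 0" "alpha * beta \<le> 1"
  shows "sufficient_decrease Xi Psi V alpha B"
  unfolding sufficient_decrease_def
proof (intro ballI impI)
  fix y s assume "y \<in> Xi" "s \<in> Psi y"
  define w where "w = y - closest_point A y"
  define y' where "y' = closest_point Xi (y - alpha *\<^sub>R s)"
  have grad: "gradV V y s = w \<bullet> s"
    using gradV_half_sq_dist[OF assms(3,4) V dV[rule_format]] w_def by blast
  have "norm (y' - closest_point A y') \<le> norm (y - alpha *\<^sub>R s - closest_point A y)"
    unfolding y'_def
    by (rule dist_closest_point_of_projection_le[OF assms(1,2,3,5) closest_point_in_set[OF assms(3,4)]])
  also have "\<dots> = norm (w - alpha *\<^sub>R s)"
    by (simp add: w_def algebra_simps)
  finally have "(norm (y' - closest_point A y'))\<^sup>2 \<le> (norm (w - alpha *\<^sub>R s))\<^sup>2"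
    by (simp add: power_mono)
  also have "\<dots> = (norm w)\<^sup>2 - 2 * alpha * (w \<bullet> s) + alpha\<^sup>2 * (norm s)\<^sup>2"
    unfolding power2_norm_eq_inner
    by (simp add: inner_diff_left inner_diff_right inner_commute algebra_simps power2_eq_square)
  also have "alpha\<^sup>2 * (norm s)\<^sup>2 \<le> alpha * (w \<bullet> s)"
  proof -
    have "(norm s)\<^sup>2 \<le> beta * gradV V y s"
      using beta \<open>y \<in> Xi\<close> \<open>s \<in> Psi y\<close> by blast
    then have ns: "(norm s)\<^sup>2 \<le> beta * (w \<bullet> s)"
      by (simp add: grad)
    then have "w \<bullet> s \<ge> 0"
      using order_trans[OF zero_le_power2 ns] \<open>beta > 0\<close> by (simp add: zero_le_mult_iff)
    have "alpha\<^sup>2 * (norm s)\<^sup>2 \<le> alpha\<^sup>2 * (beta * (w \<bullet> s))"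
      by (rule mult_left_mono[OF ns]) simp
    also have "\<dots> = (alpha * beta) * (alpha * (w \<bullet> s))"
      by (simp add: power2_eq_square mult_ac)
    also have "\<dots> \<le> 1 * (alpha * (w \<bullet> s))"
      using \<open>alpha \<ge> 0\<close> \<open>w \<bullet> s \<ge> 0\<close> by (intro mult_right_mono[OF \<open>alpha * beta \<le> 1\<close>]) simp
    finally show ?thesis
      by simp
  qed
  finally have "V y' \<le> V y - alpha / 2 * (w \<bullet> s)"
    using V[rule_format, of y'] V[rule_format, of y] unfolding w_def by linarith
  then show "V (closest_point Xi (y - alpha *\<^sub>R s)) \<le> V y - alpha / 2 * gradV V y s"
    unfolding y'_def grad .
qed

section \<open>Setting (ii): locally Lipschitz gradient\<close>

lemma lipschitz_on_compact_if_locally_lipschitz: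
  fixes g :: "'a::euclidean_space \<Rightarrow> 'b::metric_space"
  assumes "\<forall>x. \<exists>U L. open U \<and> x \<in> U \<and> L-lipschitz_on U g" "compact K"
  obtains L where "L-lipschitz_on K g"
proof -
  have "local_lipschitz {0::real} K (\<lambda>t. g)"
  proof (rule local_lipschitzI)
    fix x t assume "x \<in> K"
    obtain U L where U: "open U" "x \<in> U" "L-lipschitz_on U g"
      using assms(1) by blast
    then obtain u where "u > 0" "cball x u \<subseteq> U"
      using open_contains_cball by blast
    then have "L-lipschitz_on (cball x u \<inter> K) g"
      by (intro lipschitz_on_subset[OF U(3)]) blast
    with \<open>u > 0\<close> show "\<exists>u>0. \<exists>L. \<forall>t\<in>cball t u \<inter> {0}. L-lipschitz_on (cball x u \<inter> K) g"
      by blast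
  qed
  then obtain L where "\<And>t. t \<in> {0::real} \<Longrightarrow> L-lipschitz_on K g"
    using local_lipschitz_compact_implies_lipschitz[OF _ assms(2) compact_sing continuous_on_const]
    by blast
  then show ?thesis
    using that by blast
qed

lemma lipschitz_gradient_descent_bound:
  fixes V :: "'a::euclidean_space \<Rightarrow> real"
  assumes grad: "\<And>x. (V has_derivative (\<lambda>h. g x \<bullet> h)) (at x)"
    and lip: "L-lipschitz_on (closed_segment y (y - v)) g"
  shows "V (y - v) \<le> V y - g y \<bullet> v + L * (norm v)\<^sup>2"
proof -
  let ?S = "closed_segment y (y - v)"
  have "norm (V (y - v) - V y - g y \<bullet> (y - v - y)) \<le> norm (y - v - y) * (L * norm v)"
  proof (rule differentiable_bound_linearization[where S = ?S and f' = "\<lambda>x h. g x \<bullet> h"])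
    show "y + t *\<^sub>R (y - v - y) \<in> ?S" if "t \<in> {0..1}" for t
      using that unfolding in_segment by (intro exI[of _ t]) (auto simp: algebra_simps)
    show "(V has_derivative (\<lambda>h. g x \<bullet> h)) (at x within ?S)" for x
      using grad has_derivative_at_withinI by blast
    show "onorm ((\<lambda>h. g x \<bullet> h) - (\<lambda>h. g y \<bullet> h)) \<le> L * norm v" if "x \<in> ?S" for x
    proof (rule onorm_le)
      fix h :: 'a
      have "dist (g x) (g y) \<le> L * dist x y"
        using lipschitz_onD[OF lip that] by simp
      also have "\<dots> \<le> L * norm v"
        using dist_in_closed_segment[OF that] lipschitz_on_nonneg[OF lip]
        by (intro mult_left_mono) (auto simp: dist_norm)
      finally have "norm (g x - g y) * norm h \<le> L * norm v * norm h"
        by (simp add: dist_norm mult_right_mono)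
      then show "norm (((\<lambda>h. g x \<bullet> h) - (\<lambda>h. g y \<bullet> h)) h) \<le> L * norm v * norm h"
        using Cauchy_Schwarz_ineq2[of "g x - g y" h] by (simp add: inner_diff_left)
    qed
  qed simp
  then show ?thesis
    by (simp add: power2_eq_square abs_le_iff mult_ac)
qed

lemma norm_le_of_norm_sq_le_inner:
  fixes s w :: "'a::real_inner"
  assumes "beta > 0" "(norm s)\<^sup>2 \<le> beta * (w \<bullet> s)"
  shows "norm s \<le> beta * norm w"
proof (cases "s = 0")
  case False
  have "norm s * norm s \<le> beta * (norm w * norm s)"
    using assms Cauchy_Schwarz_ineq2[of w s]
    by (smt (verit, best) mult_left_mono power2_eq_square)
  then show ?thesis
    using False by (simp add: mult.assoc[symmetric] mult_right_le_imp_le)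
qed (use assms in simp)

lemma lipschitz_gradient_step_decrease:
  fixes V :: "'a::euclidean_space \<Rightarrow> real"
  assumes grad: "\<And>x. (V has_derivative (\<lambda>h. g x \<bullet> h)) (at x)"
    and lip: "L-lipschitz_on (closed_segment y (y - alpha *\<^sub>R s)) g"
    and beta: "(norm s)\<^sup>2 \<le> beta * (g y \<bullet> s)"
    and "alpha \<ge> 0" "beta > 0" "alpha * L * beta \<le> 1/2"
  shows "V (y - alpha *\<^sub>R s) \<le> V y - alpha / 2 * (g y \<bullet> s)"
proof -
  have "g y \<bullet> s \<ge> 0" "L \<ge> 0"
    using order_trans[OF zero_le_power2 beta] \<open>beta > 0\<close> lipschitz_on_nonneg[OF lip]
    by (auto simp: zero_le_mult_iff)
  have "L * (norm (alpha *\<^sub>R s))\<^sup>2 = alpha * (alpha * L) * (norm s)\<^sup>2"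
    using \<open>alpha \<ge> 0\<close> by (simp add: power2_eq_square mult_ac)
  also have "\<dots> \<le> alpha * (alpha * L) * (beta * (g y \<bullet> s))"
    using \<open>alpha \<ge> 0\<close> \<open>L \<ge> 0\<close> by (intro mult_left_mono[OF beta]) auto
  also have "\<dots> = alpha * ((alpha * L * beta) * (g y \<bullet> s))"
    by (simp add: mult_ac)
  also have "\<dots> \<le> alpha * (1/2 * (g y \<bullet> s))"
    using \<open>alpha \<ge> 0\<close> \<open>g y \<bullet> s \<ge> 0\<close> \<open>alpha * L * beta \<le> 1/2\<close>
    by (intro mult_left_mono mult_right_mono) auto
  finally show ?thesis
    using lipschitz_gradient_descent_bound[OF grad lip] by simp
qed

lemma sufficient_decrease_lipschitz_gradient:
  fixes A :: "'a::euclidean_space set" and V :: "'a \<Rightarrow> real"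
  assumes grad: "\<forall>y. (V has_derivative (\<lambda>h. g y \<bullet> h)) (at y)" and "continuous_on UNIV g"
    and loc_lip: "\<forall>x. \<exists>U L. open U \<and> x \<in> U \<and> L-lipschitz_on U g"
    and "rad_unb_on V A UNIV" "compact A" "A \<noteq> {}"
    and "beta > 0" and beta: "\<forall>y. \<forall>s\<in>Psi y. (norm s)\<^sup>2 \<le> beta * gradV V y s"
  shows "\<exists>alpha>0. sufficient_decrease UNIV Psi V alpha B"
proof -
  have gradV: "gradV V y s = g y \<bullet> s" for y s
    by (simp add: gradV_def frechet_derivative_at[OF grad[rule_format, of y], symmetric])
  have "continuous_on UNIV V"
    by (rule has_derivative_continuous_on[of UNIV V "\<lambda>y h. g y \<bullet> h"]) (use grad in simp)
  define S where "S = {x. V x \<le> B}"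
  have "compact S"
    unfolding S_def using compact_sublevel assms(4-6) \<open>continuous_on UNIV V\<close> by blast
  then obtain R where R: "\<forall>x\<in>S. norm x \<le> R"
    using compact_imp_bounded bounded_iff by metis
  have "continuous_on S g"
    using continuous_on_subset[OF \<open>continuous_on UNIV g\<close> subset_UNIV] .
  then obtain G where G: "\<forall>x\<in>S. norm (g x) \<le> G"
    using continuous_on_compact_bound[OF \<open>compact S\<close>] by metis
  \<comment> \<open>All steps from the sublevel set end in this ball, since \<open>\<parallel>s\<parallel> \<le> \<beta> \<parallel>\<nabla>V(y)\<parallel>\<close>.\<close>
  define K where "K = cball (0::'a) (R + beta * G)"
  obtain L where L: "L-lipschitz_on K g"
    using lipschitz_on_compact_if_locally_lipschitz[OF loc_lip compact_cball] unfolding K_def .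
  define alpha where "alpha = min 1 (1 / (2 * (L + 1) * beta))"
  have "L \<ge> 0"
    using lipschitz_on_nonneg[OF L] .
  have alpha: "alpha > 0" "alpha \<le> 1" "alpha * L * beta \<le> 1/2"
  proof -
    show "alpha > 0" "alpha \<le> 1"
      using \<open>L \<ge> 0\<close> \<open>beta > 0\<close> unfolding alpha_def by auto
    have "alpha * L * beta \<le> alpha * ((L + 1) * beta)"
      using \<open>alpha > 0\<close> \<open>beta > 0\<close> by (simp add: algebra_simps)
    also have "\<dots> \<le> 1 / (2 * (L + 1) * beta) * ((L + 1) * beta)"
      using \<open>L \<ge> 0\<close> \<open>beta > 0\<close> by (intro mult_right_mono) (auto simp: alpha_def)
    also have "\<dots> = 1/2"
      using \<open>L \<ge> 0\<close> \<open>beta > 0\<close> by simp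
    finally show "alpha * L * beta \<le> 1/2" .
  qed
  have "sufficient_decrease UNIV Psi V alpha B"
    unfolding sufficient_decrease_def
  proof (intro ballI impI)
    fix y s assume "V y \<le> B" "s \<in> Psi y"
    have "(norm s)\<^sup>2 \<le> beta * gradV V y s"
      using beta \<open>s \<in> Psi y\<close> by blast
    then have ns: "(norm s)\<^sup>2 \<le> beta * (g y \<bullet> s)"
      by (simp only: gradV)
    have "norm (alpha *\<^sub>R s) \<le> norm s"
      using alpha(1,2) by (simp add: mult_left_le_one_le)
    also have "\<dots> \<le> beta * norm (g y)"
      using norm_le_of_norm_sq_le_inner[OF \<open>beta > 0\<close> ns] .
    also have "\<dots> \<le> beta * G"
      using G \<open>V y \<le> B\<close> \<open>beta > 0\<close> unfolding S_def by simp
    finally have "norm (alpha *\<^sub>R s) \<le> beta * G" .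
    moreover have "norm y \<le> R"
      using R \<open>V y \<le> B\<close> unfolding S_def by blast
    ultimately have "norm y \<le> R + beta * G" "norm (y - alpha *\<^sub>R s) \<le> R + beta * G"
      using norm_triangle_ineq4[of y "alpha *\<^sub>R s"] norm_ge_zero[of "alpha *\<^sub>R s"] by linarith+
    then have "y \<in> K" "y - alpha *\<^sub>R s \<in> K"
      unfolding K_def by simp_all
    then have "L-lipschitz_on (closed_segment y (y - alpha *\<^sub>R s)) g"
      using lipschitz_on_subset[OF L] closed_segment_subset[OF _ _ convex_cball] unfolding K_def
      by blast
    from lipschitz_gradient_step_decrease[OF grad[rule_format] this ns _ \<open>beta > 0\<close> alpha(3)] alpha(1)
    show "V (closest_point UNIV (y - alpha *\<^sub>R s)) \<le> V y - alpha / 2 * gradV V y s"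
      by (simp add: gradV closest_point_self)
  qed
  with alpha(1) show ?thesis
    by blast
qed

theorem theorem1:
  fixes A Xi :: "'a::euclidean_space set"
    and V :: "'a \<Rightarrow> real"
    and Psi :: "'a \<Rightarrow> 'a set"
  assumes "compact A" and "A \<noteq> {}"
    and "\<forall>y. V y \<ge> 0"
    and "(Xi \<noteq> {} \<and> closed Xi \<and> convex Xi \<and> convex A \<and>
           (\<forall>y. V y = 1/2 * (norm (y - closest_point A y))\<^sup>2))
       \<or> (Xi = UNIV \<and>
           (\<exists>g :: 'a \<Rightarrow> 'a. (\<forall>y. (V has_derivative (\<lambda>h. g y \<bullet> h)) (at y)) \<and>
              continuous_on UNIV g \<and>
              (\<forall>x. \<exists>U L. open U \<and> x \<in> U \<and> L-lipschitz_on U g)) \<and>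
           pos_def_wrt V A \<and> rad_unb_on V A UNIV)"
    and "SPSP Psi V Xi A"
    and "\<exists>beta>0. \<forall>y\<in>Xi. \<forall>s\<in>Psi y. (norm s)\<^sup>2 \<le> beta * gradV V y s"
  shows "SPAS Xi Psi A"
proof -
  have dV: "\<forall>y. V differentiable (at y)" and unb: "rad_unb_on V A UNIV"
    and "\<forall>a\<in>A. \<exists>e>0. ball a e \<subseteq> Xi"
    using assms(5) unfolding SPSP_def by blast+
  then have "A \<subseteq> Xi"
    by (meson centre_in_ball subset_iff)
  obtain beta where "beta > 0" and beta: "\<forall>y\<in>Xi. \<forall>s\<in>Psi y. (norm s)\<^sup>2 \<le> beta * gradV V y s"
    using assms(6) by blast
  then have grad_nonneg: "\<forall>y\<in>Xi. \<forall>s\<in>Psi y. gradV V y s \<ge> 0"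
    using order_trans[OF zero_le_power2] by (fastforce simp: zero_le_mult_iff)
  from assms(4) consider
      (projection) "closed Xi" "convex Xi" "\<forall>y. V y = 1/2 * (norm (y - closest_point A y))\<^sup>2"
    | (smooth) g where "Xi = UNIV" "\<forall>y. (V has_derivative (\<lambda>h. g y \<bullet> h)) (at y)"
        "continuous_on UNIV g" "\<forall>x. \<exists>U L. open U \<and> x \<in> U \<and> L-lipschitz_on U g"
    by blast
  then have "closed Xi \<and> (\<forall>B. \<exists>alpha>0. sufficient_decrease Xi Psi V alpha B)"
  proof cases
    case projection
    have "sufficient_decrease Xi Psi V (1 / beta) B" for B
      using sufficient_decrease_half_sq_dist[OF projection(1,2) compact_imp_closed[OF assms(1)]
          assms(2) \<open>A \<subseteq> Xi\<close> projection(3) dV \<open>beta > 0\<close> beta] \<open>beta > 0\<close>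
      by simp
    then show ?thesis
      using projection(1) \<open>beta > 0\<close> by (metis zero_less_divide_1_iff)
  next
    case smooth
    then show ?thesis
      using sufficient_decrease_lipschitz_gradient[OF smooth(2-4) unb assms(1,2) \<open>beta > 0\<close>] beta
      by simp
  qed
  then show ?thesis
    using SPAS_of_sufficient_decrease[OF assms(5,2) _ grad_nonneg] by blast
qed

end
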